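(* In the calculus $\lambda^{RE}$ described in the context, parallel reduction is a forward simulation: if $e_1\Rrightarrow e_2$ and $e_1\to e_1'$, then there exists $e_2'$ such that $e_2\to^*e_2'$ and $e_1'\Rrightarrow e_2'$.
   Context: Syntax of $\lambda^{RE}$. Basic types $b ::= \mathsf{Bool}\mid\mathsf{Unit}$. Constants $c ::= \mathsf{true}\mid\mathsf{false}\mid\mathsf{unit}\mid (=_b)\mid (=_{(c,b)})$. Expressions $e ::= c\mid x\mid e\ e\mid \lambda x{:}\tau.\,e\mid \mathsf{BEq}_b\ e\ e\ e\mid \mathsf{XEq}_{x:\tau\to\tau}\ e\ e\ e$. Values $v ::= c\mid \lambda x{:}\tau.\,e\mid \mathsf{BEq}_b\ e\ e\ v\mid \mathsf{XEq}_{x:\tau\to\tau}\ e\ e\ v$. Types $\tau ::= \{x{:}b\mid e\}\mid x{:}\tau\to\tau\mid \mathsf{PEq}_{\tau}\{e\}\{e\}$. $e[x:=e']$ is capture-avoiding substitution. Reduction: evaluation contexts $E ::= \bullet\mid E\ e\mid v\ E\mid \mathsf{BEq}_b\ e\ e\ E\mid\mathsf{XEq}_{x:\tau\to\tau}\ e\ e\ E$; $E[e]\to E[e']$ if $e\to e'$; $(\lambda x{:}\tau.\,e)\ v\to e[x:=v]$; $(=_b)\ c_1\to(=_{(c_1,b)})$; $(=_{(c_1,b)})\ c_2\to\mathsf{true}$ if $c_1,c_2$ syntactically equal, else $\to\mathsf{false}$. $\to^*$ is the reflexive–transitive closure. Parallel reduction $e\Rrightarrow e'$ and $\tau\Rrightarrow\tau'$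 is defined inductively: $x\Rrightarrow x$; $c\Rrightarrow c$; $\lambda x{:}\tau.e\Rrightarrow\lambda x{:}\tau'.e'$ if $\tau\Rrightarrow\tau'$, $e\Rrightarrow e'$; $e_1\ e_2\Rrightarrow e_1'\ e_2'$ if $e_i\Rrightarrow e_i'$; $(\lambda x{:}\tau.e)\ v\Rrightarrow e'[x:=v']$ if $e\Rrightarrow e'$ and $v\Rrightarrow v'$; $(=_b)\ c_1\Rrightarrow(=_{(c_1,b)})$; $(=_{(c_1,b)})\ c_2\Rrightarrow d$ where $d=\mathsf{true}$ if $c_1,c_2$ are syntactically equal and $\mathsf{false}$ otherwise; $\mathsf{BEq}_b\ e_l\ e_r\ e\Rrightarrow\mathsf{BEq}_b\ e_l'\ e_r'\ e'$ if $e_l\Rrightarrow e_l'$, $e_r\Rrightarrow e_r'$, $e\Rrightarrow e'$; $\mathsf{XEq}_{x:\tau_x\to\tau}\ e_l\ e_r\ e\Rrightarrow\mathsf{XEq}_{x:\tau_x'\to\tau'}\ e_l'\ e_r'\ e'$ if all five components parallel reduce; on types: $\{x{:}b\mid r\}\Rrightarrow\{x{:}b\mid r'\}$ if $r\Rrightarrow r'$; $x{:}\tau_x\to\tau\Rrightarrow x{:}\tau_x'\to\tau'$ if $\tau_x\Rrightarrow\tau_x'$, $\tau\Rrightarrow\tau'$; $\mathsf{PEq}_\tau\{e_l\}\{e_r\}\Rrightarrow\mathsf{PEq}_{\tau'}\{e_l'\}\{e_r'\}$ if all components parallel reduce. *)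

theory Defs
  imports Main
begin

datatype basic = TBool | TUnit

text \<open>Constants: true | false | unit | (=_b) | (=_(c,b)).\<close>
datatype const = CTrue | CFalse | CUnit | CEq basic | CEq1 const basic

text \<open>Expressions and types. Variables are de Bruijn indices.
  Binders: Lam t e binds in e; TRefn b r binds in r; TFun tx t binds in t;
  XEq tx t el er e binds (only) in t.\<close>
datatype expr =
    Const const
  | BVar nat
  | App expr expr
  | Lam ty expr
  | BEq basic expr expr expr
  | XEq ty ty expr expr expr
and ty =
    TRefn basic expr
  | TFun ty ty
  | TPEq ty expr expr

primrec lift_e :: "nat \<Rightarrow> expr \<Rightarrow> expr" and lift_t :: "nat \<Rightarrow> ty \<Rightarrow> ty" where
  "lift_e k (Const c) = Const c"
| "lift_e k (BVar i) = (if i < k then BVar i else BVar (Suc i))"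
| "lift_e k (App e1 e2) = App (lift_e k e1) (lift_e k e2)"
| "lift_e k (Lam t e) = Lam (lift_t k t) (lift_e (Suc k) e)"
| "lift_e k (BEq b el er e) = BEq b (lift_e k el) (lift_e k er) (lift_e k e)"
| "lift_e k (XEq tx t el er e) =
     XEq (lift_t k tx) (lift_t (Suc k) t) (lift_e k el) (lift_e k er) (lift_e k e)"
| "lift_t k (TRefn b r) = TRefn b (lift_e (Suc k) r)"
| "lift_t k (TFun tx t) = TFun (lift_t k tx) (lift_t (Suc k) t)"
| "lift_t k (TPEq t el er) = TPEq (lift_t k t) (lift_e k el) (lift_e k er)"

primrec subst_e :: "nat \<Rightarrow> expr \<Rightarrow> expr \<Rightarrow> expr"
    and subst_t :: "nat \<Rightarrow> expr \<Rightarrow> ty \<Rightarrow> ty" where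
  "subst_e k s (Const c) = Const c"
| "subst_e k s (BVar i) = (if i < k then BVar i else if i = k then s else BVar (i - 1))"
| "subst_e k s (App e1 e2) = App (subst_e k s e1) (subst_e k s e2)"
| "subst_e k s (Lam t e) = Lam (subst_t k s t) (subst_e (Suc k) (lift_e 0 s) e)"
| "subst_e k s (BEq b el er e) = BEq b (subst_e k s el) (subst_e k s er) (subst_e k s e)"
| "subst_e k s (XEq tx t el er e) =
     XEq (subst_t k s tx) (subst_t (Suc k) (lift_e 0 s) t)
         (subst_e k s el) (subst_e k s er) (subst_e k s e)"
| "subst_t k s (TRefn b r) = TRefn b (subst_e (Suc k) (lift_e 0 s) r)"
| "subst_t k s (TFun tx t) = TFun (subst_t k s tx) (subst_t (Suc k) (lift_e 0 s) t)"
| "subst_t k s (TPEq t el er) = TPEq (subst_t k s t) (subst_e k s el) (subst_e k s er)"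

inductive is_value :: "expr \<Rightarrow> bool" where
  val_const: "is_value (Const c)"
| val_lam: "is_value (Lam t e)"
| val_beq: "is_value v \<Longrightarrow> is_value (BEq b el er v)"
| val_xeq: "is_value v \<Longrightarrow> is_value (XEq tx t el er v)"

datatype ectx =
    Hole
  | CAppL ectx expr
  | CAppR expr ectx
  | CBEq basic expr expr ectx
  | CXEq ty ty expr expr ectx

fun is_ectx :: "ectx \<Rightarrow> bool" where
  "is_ectx Hole = True"
| "is_ectx (CAppL E e) = is_ectx E"
| "is_ectx (CAppR v E) = (is_value v \<and> is_ectx E)"
| "is_ectx (CBEq b el er E) = is_ectx E"
| "is_ectx (CXEq tx t el er E) = is_ectx E"

fun plug :: "ectx \<Rightarrow> expr \<Rightarrow> expr" where
  "plug Hole e = e"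
| "plug (CAppL E e2) e = App (plug E e) e2"
| "plug (CAppR v E) e = App v (plug E e)"
| "plug (CBEq b el er E) e = BEq b el er (plug E e)"
| "plug (CXEq tx t el er E) e = XEq tx t el er (plug E e)"

inductive step :: "expr \<Rightarrow> expr \<Rightarrow> bool" where
  step_ctx: "is_ectx E \<Longrightarrow> step e e' \<Longrightarrow> step (plug E e) (plug E e')"
| step_beta: "is_value v \<Longrightarrow> step (App (Lam t e) v) (subst_e 0 v e)"
| step_eq1: "step (App (Const (CEq b)) (Const c1)) (Const (CEq1 c1 b))"
| step_eq2: "step (App (Const (CEq1 c1 b)) (Const c2))
               (Const (if c1 = c2 then CTrue else CFalse))"

abbreviation steps :: "expr \<Rightarrow> expr \<Rightarrow> bool" where
  "steps \<equiv> step\<^sup>*\<^sup>*"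

inductive par_e :: "expr \<Rightarrow> expr \<Rightarrow> bool" and par_t :: "ty \<Rightarrow> ty \<Rightarrow> bool" where
  par_var: "par_e (BVar i) (BVar i)"
| par_const: "par_e (Const c) (Const c)"
| par_lam: "par_t t t' \<Longrightarrow> par_e e e' \<Longrightarrow> par_e (Lam t e) (Lam t' e')"
| par_app: "par_e e1 e1' \<Longrightarrow> par_e e2 e2' \<Longrightarrow> par_e (App e1 e2) (App e1' e2')"
| par_beta: "par_e e e' \<Longrightarrow> is_value v \<Longrightarrow> par_e v v' \<Longrightarrow>
             par_e (App (Lam t e) v) (subst_e 0 v' e')"
| par_eq1: "par_e (App (Const (CEq b)) (Const c1)) (Const (CEq1 c1 b))"
| par_eq2: "par_e (App (Const (CEq1 c1 b)) (Const c2))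
              (Const (if c1 = c2 then CTrue else CFalse))"
| par_beq: "par_e el el' \<Longrightarrow> par_e er er' \<Longrightarrow> par_e e e' \<Longrightarrow>
            par_e (BEq b el er e) (BEq b el' er' e')"
| par_xeq: "par_t tx tx' \<Longrightarrow> par_t t t' \<Longrightarrow> par_e el el' \<Longrightarrow> par_e er er' \<Longrightarrow>
            par_e e e' \<Longrightarrow> par_e (XEq tx t el er e) (XEq tx' t' el' er' e')"
| part_refn: "par_e r r' \<Longrightarrow> par_t (TRefn b r) (TRefn b r')"
| part_fun: "par_t tx tx' \<Longrightarrow> par_t t t' \<Longrightarrow> par_t (TFun tx t) (TFun tx' t')"
| part_peq: "par_t t t' \<Longrightarrow> par_e el el' \<Longrightarrow> par_e er er' \<Longrightarrow>
             par_t (TPEq t el er) (TPEq t' el' er')"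

end

theory Submission
  imports Defs
begin

text \<open>Parallel reduction commutes with substitution and maps values to values. So if a step
  happens under an evaluation context, the parallel reduct has the same context shape and the
  step can be replayed inside it. If the step contracts a beta-redex, parallel reduction either
  contracted it too (then the substitution lemma closes the diagram without any step) or kept
  it (then one beta step of the reduct does); primitive equality redexes are handled likewise.\<close>

lemma lift_lift:
  shows "k \<le> j \<Longrightarrow> lift_e k (lift_e j e) = lift_e (Suc j) (lift_e k e)"
    and "k \<le> j \<Longrightarrow> lift_t k (lift_t j t) = lift_t (Suc j) (lift_t k t)"
  by (induct e and t arbitrary: k j and k j) auto

lemma subst_lift:
  shows "subst_e k s (lift_e k e) = e"
    and "subst_t k s (lift_t k t) = t"
  by (induct e and t arbitrary: k s and k s) auto

lemma lift_subst_above: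
  shows "j \<le> k \<Longrightarrow> lift_e j (subst_e k s e) = subst_e (Suc k) (lift_e j s) (lift_e j e)"
    and "j \<le> k \<Longrightarrow> lift_t j (subst_t k s t) = subst_t (Suc k) (lift_e j s) (lift_t j t)"
  by (induct e and t arbitrary: j k s and j k s) (auto simp: lift_lift)

lemma lift_subst_below:
  shows "k \<le> j \<Longrightarrow> lift_e j (subst_e k s e) = subst_e k (lift_e j s) (lift_e (Suc j) e)"
    and "k \<le> j \<Longrightarrow> lift_t j (subst_t k s t) = subst_t k (lift_e j s) (lift_t (Suc j) t)"
  by (induct e and t arbitrary: j k s and j k s) (auto simp: lift_lift)

lemma subst_subst:
  shows "j \<le> k \<Longrightarrow>
      subst_e k s (subst_e j v e) = subst_e j (subst_e k s v) (subst_e (Suc k) (lift_e j s) e)"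
    and "j \<le> k \<Longrightarrow>
      subst_t k s (subst_t j v t) = subst_t j (subst_e k s v) (subst_t (Suc k) (lift_e j s) t)"
  by (induct e and t arbitrary: j k s v and j k s v)
    (auto simp: lift_lift lift_subst_above subst_lift)

lemma is_value_lift: "is_value v \<Longrightarrow> is_value (lift_e k v)"
  by (induct v rule: is_value.induct) (auto intro: is_value.intros)

lemma is_value_subst: "is_value v \<Longrightarrow> is_value (subst_e k s v)"
  by (induct v rule: is_value.induct) (auto intro: is_value.intros)

lemma par_refl: shows "par_e e e" and "par_t t t"
  by (induct e and t) (auto intro: par_e_par_t.intros)

lemma par_lift:
  shows "par_e e e' \<Longrightarrow> par_e (lift_e k e) (lift_e k e')"
    and "par_t t t' \<Longrightarrow> par_t (lift_t k t) (lift_t k t')"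
proof (induct arbitrary: k and k rule: par_e_par_t.inducts)
  case (par_beta e e' v v' t)
  then show ?case
    using par_e_par_t.par_beta[OF par_beta(2) is_value_lift[OF par_beta(3)] par_beta(5)]
    by (simp add: lift_subst_below)
next
  case (par_eq2 c1 b c2)
  show ?case using par_e_par_t.par_eq2[of c1 b c2] by simp
qed (auto intro: par_e_par_t.intros)

lemma par_subst:
  shows "par_e e e' \<Longrightarrow> par_e s s' \<Longrightarrow> par_e (subst_e k s e) (subst_e k s' e')"
    and "par_t t t' \<Longrightarrow> par_e s s' \<Longrightarrow> par_t (subst_t k s t) (subst_t k s' t')"
proof (induct arbitrary: k s s' and k s s' rule: par_e_par_t.inducts)
  case (par_beta e e' v v' t)
  have "par_e (subst_e (Suc k) (lift_e 0 s) e) (subst_e (Suc k) (lift_e 0 s') e')"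
    using par_beta par_lift by blast
  from par_e_par_t.par_beta[OF this is_value_subst[OF par_beta(3)] par_beta(5)[OF par_beta(6)]]
  show ?case by (simp add: subst_subst)
next
  case (par_eq2 c1 b c2)
  show ?case using par_e_par_t.par_eq2[of c1 b c2] by simp
qed (auto simp: par_refl par_lift intro: par_e_par_t.intros)

inductive_cases par_ConstE: "par_e (Const c) e"
inductive_cases par_LamE: "par_e (Lam t e) f"

lemma is_value_par: "is_value v \<Longrightarrow> par_e v v' \<Longrightarrow> is_value v'"
proof (induct v arbitrary: v' rule: is_value.induct)
  case (val_beq v b el er)
  from val_beq(3) show ?case
    by (cases rule: par_e.cases) (auto intro: is_value.intros val_beq)
next
  case (val_xeq v tx t el er)
  from val_xeq(3) show ?case
    by (cases rule: par_e.cases) (auto intro: is_value.intros val_xeq)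
qed (auto elim: par_ConstE par_LamE intro: is_value.intros)

lemma steps_plug: "steps e e' \<Longrightarrow> is_ectx E \<Longrightarrow> steps (plug E e) (plug E e')"
  by (induct rule: rtranclp_induct) (auto intro: rtranclp.rtrancl_into_rtrancl step_ctx)

inductive cstep :: "expr \<Rightarrow> expr \<Rightarrow> bool" where
  cstep_appL: "cstep e1 e1' \<Longrightarrow> cstep (App e1 e2) (App e1' e2)"
| cstep_appR: "is_value v \<Longrightarrow> cstep e2 e2' \<Longrightarrow> cstep (App v e2) (App v e2')"
| cstep_beq: "cstep e e' \<Longrightarrow> cstep (BEq b el er e) (BEq b el er e')"
| cstep_xeq: "cstep e e' \<Longrightarrow> cstep (XEq tx t el er e) (XEq tx t el er e')"
| cstep_beta: "is_value v \<Longrightarrow> cstep (App (Lam t e) v) (subst_e 0 v e)"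
| cstep_eq1: "cstep (App (Const (CEq b)) (Const c1)) (Const (CEq1 c1 b))"
| cstep_eq2: "cstep (App (Const (CEq1 c1 b)) (Const c2))
               (Const (if c1 = c2 then CTrue else CFalse))"

lemma cstep_plug: "is_ectx E \<Longrightarrow> cstep e e' \<Longrightarrow> cstep (plug E e) (plug E e')"
  by (induct E) (auto intro: cstep.intros)

lemma step_imp_cstep: "step e e' \<Longrightarrow> cstep e e'"
  by (induct rule: step.induct) (blast intro: cstep.intros cstep_plug)+

lemma cstep_not_value: "cstep e e' \<Longrightarrow> \<not> is_value e"
  by (induct rule: cstep.induct) (auto elim: is_value.cases)

lemma par_beta_redex_simulation:
  assumes "is_value v" and "par_e (App (Lam t e) v) e2"
  shows "\<exists>e2'. steps e2 e2' \<and> par_e (subst_e 0 v e) e2'"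
  using assms(2)
proof (cases rule: par_e.cases)
  case (par_app f w)
  from par_app(2) obtain t' e' where f: "f = Lam t' e'" "par_e e e'"
    by (rule par_LamE) auto
  have "is_value w" using par_app assms(1) is_value_par by blast
  then have "step e2 (subst_e 0 w e')" using par_app f step_beta by simp
  moreover have "par_e (subst_e 0 v e) (subst_e 0 w e')"
    using par_subst(1)[OF f(2) par_app(3)] .
  ultimately show ?thesis by blast
next
  case (par_beta e' w)
  then show ?thesis using par_subst(1) by blast
qed

lemma par_eq1_redex_cases:
  "par_e (App (Const (CEq b)) (Const c)) e \<Longrightarrow>
    e = App (Const (CEq b)) (Const c) \<or> e = Const (CEq1 c b)"
  by (auto elim: par_e.cases par_ConstE)

lemma par_eq2_redex_cases:
  "par_e (App (Const (CEq1 c1 b)) (Const c2)) e \<Longrightarrow>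
    e = App (Const (CEq1 c1 b)) (Const c2) \<or> e = Const (if c1 = c2 then CTrue else CFalse)"
  by (auto elim: par_e.cases par_ConstE)

lemma cstep_par_simulation:
  "cstep e1 e1' \<Longrightarrow> par_e e1 e2 \<Longrightarrow> \<exists>e2'. steps e2 e2' \<and> par_e e1' e2'"
proof (induct arbitrary: e2 rule: cstep.induct)
  case (cstep_appL e1 e1' a)
  from cstep_appL(3) show ?case
  proof (cases rule: par_e.cases)
    case (par_app f a')
    with cstep_appL(2) obtain f' where "steps f f'" "par_e e1' f'" by blast
    then show ?thesis
      using par_app steps_plug[where E = "CAppL Hole a'"]
      by (auto intro: par_e_par_t.par_app)
  qed (use cstep_appL(1) cstep_not_value in \<open>auto intro: is_value.intros\<close>)
next
  case (cstep_appR v a a')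
  from cstep_appR(4) show ?case
  proof (cases rule: par_e.cases)
    case (par_app w b)
    with cstep_appR(3) obtain b' where "steps b b'" "par_e a' b'" by blast
    moreover have "is_value w" using par_app cstep_appR(1) is_value_par by blast
    ultimately show ?thesis
      using par_app steps_plug[where E = "CAppR w Hole"]
      by (auto intro: par_e_par_t.par_app)
  qed (use cstep_appR(2) cstep_not_value in \<open>auto intro: is_value.intros\<close>)
next
  case (cstep_beq e e' b el er)
  from cstep_beq(3) show ?case
  proof (cases rule: par_e.cases)
    case (par_beq el' er' f)
    with cstep_beq(2) obtain f' where "steps f f'" "par_e e' f'" by blast
    then show ?thesis
      using par_beq steps_plug[where E = "CBEq b el' er' Hole"]
      by (auto intro: par_e_par_t.par_beq)
  qed
next
  case (cstep_xeq e e' tx t el er)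
  from cstep_xeq(3) show ?case
  proof (cases rule: par_e.cases)
    case (par_xeq tx' t' el' er' f)
    with cstep_xeq(2) obtain f' where "steps f f'" "par_e e' f'" by blast
    then show ?thesis
      using par_xeq steps_plug[where E = "CXEq tx' t' el' er' Hole"]
      by (auto intro: par_e_par_t.par_xeq)
  qed
next
  case (cstep_beta v t e)
  then show ?case by (rule par_beta_redex_simulation)
next
  case (cstep_eq1 b c1)
  then show ?case using par_eq1_redex_cases step_eq1 par_refl by blast
next
  case (cstep_eq2 c1 b c2)
  then show ?case using par_eq2_redex_cases step_eq2 par_refl by blast
qed

theorem lemmaC5:
  assumes "par_e e1 e2" and "step e1 e1'"
  shows "\<exists>e2'. steps e2 e2' \<and> par_e e1' e2'"
  using cstep_par_simulation[OF step_imp_cstep[OF assms(2)] assms(1)] .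

end
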